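(* Let $L_0$ be a normal modal logic with $\mathbf{T}\subseteq L_0$. Suppose $L_0$ is complete with respect to a class $C$ of Kripke frames or general frames such that for every $\mathcal W\in C$ the frame $2\mathcal W$ is an $L_0$-frame. Then $L_0$ has the strong boxdot property: for every normal modal logic $L$, if $\mathrm{BD}(L)\subseteq L_0$ then $L\subseteq L_0$.
   Context: Modal formulas are built from propositional variables with Boolean connectives and a single modality $\Box$. A normal modal logic (nml) is a set of formulas containing all classical tautologies and $\Box(p\to q)\to(\Box p\to\Box q)$, and closed under modus ponens, necessitation and substitution. $\mathbf K$ is the smallest nml, and $\mathbf T=\mathbf K\oplus(\Box p\to p)$. The boxdot translation $\varphi\mapsto\varphi^{\boxdot}$ fixes propositional variables, commutes with Boolean connectives, and satisfies $(\Box\varphi)^{\boxdot}=\boxdot\varphi^{\boxdot}$, where $\boxdot\psi$ abbreviates $\psi\wedge\Box\psi$. For an nml $L$, let $\mathrm{BD}(L)=\{\varphi:\varphi^{\boxdot}\in L\}$. A general frame is a triple $\langle W,R,A\rangle$ where $R\subseteq W\times W$ and $A\subseteq\mathcal P(W)$ is closed under Boolean operations and under $\Box X=\{w:\forall v\,(wRv\Rightarrow v\in X)\}$. Models based on it are those in which every variable denotes a set in $A$. A formula is valid in the frame if it holds at every point of every model based on the frame. A Kripke frame $\langle W,R\rangle$ is identified with $\langle W,R,\mathcal P(W)\rangle$. A frame is an $L$-frame if all formulas of $L$ are valid in it. $L$ is complete with respect to $C$ if every $\varphi\notin L$ is invalid in some frame of $C$. For a Kripke frame $\mathcal W=\langle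 W,R\rangle$, the frame $2\mathcal W=\langle 2W,2R\rangle$ is defined by $2W=W\times\{0,1\}$ and $\langle w,a\rangle\,2R\,\langle v,b\rangle$ iff $wRv$. For a general frame $\langle W,R,A\rangle$, $2\mathcal W=\langle 2W,2R,2A\rangle$ with $2A=\{(X\times\{0\})\cup(Y\times\{1\}):X,Y\in A\}$. *)

theory Defs
  imports Main
begin

datatype fm = Var nat | Bot | Imp fm fm | Box fm

definition Neg :: "fm \<Rightarrow> fm" where "Neg a = Imp a Bot"
definition Top :: fm where "Top = Imp Bot Bot"
definition Or :: "fm \<Rightarrow> fm \<Rightarrow> fm" where "Or a b = Imp (Neg a) b"
definition And :: "fm \<Rightarrow> fm \<Rightarrow> fm" where "And a b = Neg (Imp a (Neg b))"

fun peval :: "(fm \<Rightarrow> bool) \<Rightarrow> fm \<Rightarrow> bool" where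
  "peval v (Var n) = v (Var n)"
| "peval v Bot = False"
| "peval v (Imp a b) = (peval v a \<longrightarrow> peval v b)"
| "peval v (Box a) = v (Box a)"

definition tautology :: "fm \<Rightarrow> bool" where
  "tautology a \<longleftrightarrow> (\<forall>v. peval v a)"

primrec subst :: "(nat \<Rightarrow> fm) \<Rightarrow> fm \<Rightarrow> fm" where
  "subst s (Var n) = s n"
| "subst s Bot = Bot"
| "subst s (Imp a b) = Imp (subst s a) (subst s b)"
| "subst s (Box a) = Box (subst s a)"

definition axK :: fm where
  "axK = Imp (Box (Imp (Var 0) (Var 1))) (Imp (Box (Var 0)) (Box (Var 1)))"

definition axT :: fm where
  "axT = Imp (Box (Var 0)) (Var 0)"

definition nml :: "fm set \<Rightarrow> bool" where
  "nml L \<longleftrightarrow>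
     (\<forall>a. tautology a \<longrightarrow> a \<in> L) \<and> axK \<in> L \<and>
     (\<forall>a b. a \<in> L \<longrightarrow> Imp a b \<in> L \<longrightarrow> b \<in> L) \<and>
     (\<forall>a. a \<in> L \<longrightarrow> Box a \<in> L) \<and>
     (\<forall>a s. a \<in> L \<longrightarrow> subst s a \<in> L)"

definition logicK :: "fm set" where
  "logicK = \<Inter>{L. nml L}"

definition logicT :: "fm set" where
  "logicT = \<Inter>{L. nml L \<and> axT \<in> L}"

primrec boxdot :: "fm \<Rightarrow> fm" where
  "boxdot (Var n) = Var n"
| "boxdot Bot = Bot"
| "boxdot (Imp a b) = Imp (boxdot a) (boxdot b)"
| "boxdot (Box a) = And (boxdot a) (Box (boxdot a))"

definition BD :: "fm set \<Rightarrow> fm set" where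
  "BD L = {a. boxdot a \<in> L}"

record 'w gframe =
  worlds :: "'w set"
  rel :: "('w \<times> 'w) set"
  adm :: "'w set set"

definition boxset :: "'w gframe \<Rightarrow> 'w set \<Rightarrow> 'w set" where
  "boxset F X = {w \<in> worlds F. \<forall>v. (w, v) \<in> rel F \<longrightarrow> v \<in> X}"

definition gen_frame :: "'w gframe \<Rightarrow> bool" where
  "gen_frame F \<longleftrightarrow>
     rel F \<subseteq> worlds F \<times> worlds F \<and>
     adm F \<subseteq> Pow (worlds F) \<and>
     {} \<in> adm F \<and>
     (\<forall>X\<in>adm F. worlds F - X \<in> adm F) \<and>
     (\<forall>X\<in>adm F. \<forall>Y\<in>adm F. X \<union> Y \<in> adm F) \<and>
     (\<forall>X\<in>adm F. \<forall>Y\<in>adm F. X \<inter> Y \<in> adm F) \<and>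
     (\<forall>X\<in>adm F. boxset F X \<in> adm F)"

definition kripke :: "'w set \<Rightarrow> ('w \<times> 'w) set \<Rightarrow> 'w gframe" where
  "kripke W R = \<lparr>worlds = W, rel = R, adm = Pow W\<rparr>"

fun sat :: "'w gframe \<Rightarrow> (nat \<Rightarrow> 'w set) \<Rightarrow> 'w \<Rightarrow> fm \<Rightarrow> bool" where
  "sat F V w (Var n) = (w \<in> V n)"
| "sat F V w Bot = False"
| "sat F V w (Imp a b) = (sat F V w a \<longrightarrow> sat F V w b)"
| "sat F V w (Box a) = (\<forall>v. (w, v) \<in> rel F \<longrightarrow> sat F V v a)"

definition valid_in :: "'w gframe \<Rightarrow> fm \<Rightarrow> bool" where
  "valid_in F a \<longleftrightarrow>
     (\<forall>V. (\<forall>n. V n \<in> adm F) \<longrightarrow> (\<forall>w\<in>worlds F. sat F V w a))"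

definition L_frame :: "fm set \<Rightarrow> 'w gframe \<Rightarrow> bool" where
  "L_frame L F \<longleftrightarrow> (\<forall>a\<in>L. valid_in F a)"

definition complete_wrt :: "fm set \<Rightarrow> 'w gframe set \<Rightarrow> bool" where
  "complete_wrt L C \<longleftrightarrow> (\<forall>a. a \<notin> L \<longrightarrow> (\<exists>F\<in>C. \<not> valid_in F a))"

section \<open>The doubled frame 2W (0 = False, 1 = True)\<close>

definition double :: "'w gframe \<Rightarrow> ('w \<times> bool) gframe" where
  "double F = \<lparr>worlds = worlds F \<times> UNIV,
               rel = {((w, a), (v, b)). (w, v) \<in> rel F},
               adm = {(X \<times> {False}) \<union> (Y \<times> {True}) | X Y. X \<in> adm F \<and> Y \<in> adm F}\<rparr>"

definition strong_boxdot_property :: "fm set \<Rightarrow> bool" where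
  "strong_boxdot_property L0 \<longleftrightarrow> (\<forall>L. nml L \<longrightarrow> BD L \<subseteq> L0 \<longrightarrow> L \<subseteq> L0)"

end

theory Submission
  imports Defs
begin

text \<open>Pick a variable q not occurring in \<phi> and replace every box \<box>a by the cross box
  (q \<rightarrow> \<box>(\<not>q \<rightarrow> a)) \<and> (\<not>q \<rightarrow> \<box>(q \<rightarrow> a)), obtaining t(\<phi>); let g(\<phi>) say that along every
  nested box the two halves \<box>(\<not>q \<rightarrow> a) and \<box>(q \<rightarrow> a) agree. Every normal modal logic proves
  the boxdot translation of g(\<phi>) \<rightarrow> (t(\<phi>) \<leftrightarrow> \<phi>), because under the boxdot of the guard the
  cross box collapses to an ordinary box. So \<phi> \<in> L puts g(\<phi>) \<rightarrow> t(\<phi>) into BD(L) \<subseteq> L0,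
  and it is valid in every 2W with W \<in> C. Interpreting q as the second copy of W, the cross
  box at (w, i) only looks at successors in the other copy, which mirror W; hence g(\<phi>) holds
  and t(\<phi>) is equivalent to \<phi> at w. Thus \<phi> is valid in every frame of C, and \<phi> \<in> L0 by
  completeness.\<close>

definition Iff :: "fm \<Rightarrow> fm \<Rightarrow> fm" where
  "Iff a b = And (Imp a b) (Imp b a)"

lemma peval_derived [simp]:
  "peval v (Neg a) = (\<not> peval v a)"
  "peval v (And a b) = (peval v a \<and> peval v b)"
  "peval v (Iff a b) = (peval v a \<longleftrightarrow> peval v b)"
  "peval v Top"
  by (auto simp: Neg_def And_def Iff_def Top_def)

lemma sat_derived [simp]:
  "sat F V w (Neg a) = (\<not> sat F V w a)"
  "sat F V w (And a b) = (sat F V w a \<and> sat F V w b)"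
  "sat F V w (Iff a b) = (sat F V w a \<longleftrightarrow> sat F V w b)"
  "sat F V w Top"
  by (auto simp: Neg_def And_def Iff_def Top_def)

lemma boxdot_derived [simp]:
  "boxdot (Neg a) = Neg (boxdot a)"
  "boxdot (And a b) = And (boxdot a) (boxdot b)"
  "boxdot (Iff a b) = Iff (boxdot a) (boxdot b)"
  "boxdot Top = Top"
  by (simp_all add: Neg_def And_def Iff_def Top_def)

primrec vars :: "fm \<Rightarrow> nat set" where
  "vars (Var m) = {m}"
| "vars Bot = {}"
| "vars (Imp a b) = vars a \<union> vars b"
| "vars (Box a) = vars a"

lemma finite_vars: "finite (vars a)"
  by (induction a) auto

lemma nml_tautology: "nml L \<Longrightarrow> tautology a \<Longrightarrow> a \<in> L"
  unfolding nml_def by blast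

lemma nml_mp: "nml L \<Longrightarrow> a \<in> L \<Longrightarrow> Imp a b \<in> L \<Longrightarrow> b \<in> L"
  unfolding nml_def by blast

lemma nml_nec: "nml L \<Longrightarrow> a \<in> L \<Longrightarrow> Box a \<in> L"
  unfolding nml_def by blast

lemma nml_mp_list: "nml L \<Longrightarrow> set as \<subseteq> L \<Longrightarrow> foldr Imp as c \<in> L \<Longrightarrow> c \<in> L"
  by (induction as) (auto dest: nml_mp)

lemma nml_tautological_consequence:
  "nml L \<Longrightarrow> set as \<subseteq> L \<Longrightarrow> tautology (foldr Imp as c) \<Longrightarrow> c \<in> L"
  using nml_mp_list nml_tautology by blast

lemma nml_K: "nml L \<Longrightarrow> Imp (Box (Imp a b)) (Imp (Box a) (Box b)) \<in> L"
proof -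
  assume L: "nml L"
  then have "subst (\<lambda>k. if k = 0 then a else if k = 1 then b else Var k) axK \<in> L"
    unfolding nml_def by blast
  then show ?thesis by (simp add: axK_def)
qed

lemma nml_Box_mono: "nml L \<Longrightarrow> Imp a b \<in> L \<Longrightarrow> Imp (Box a) (Box b) \<in> L"
  using nml_K nml_nec nml_mp by blast

lemma nml_Box_regular:
  assumes L: "nml L" and "Imp a (Imp b c) \<in> L"
  shows "Imp (Box a) (Imp (Box b) (Box c)) \<in> L"
proof (rule nml_tautological_consequence[OF L])
  show "set [Imp (Box a) (Box (Imp b c)), Imp (Box (Imp b c)) (Imp (Box b) (Box c))] \<subseteq> L"
    using nml_Box_mono[OF L assms(2)] nml_K[OF L] by simp
qed (auto simp: tautology_def)

definition cross_box :: "nat \<Rightarrow> fm \<Rightarrow> fm" where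
  "cross_box q x =
     And (Imp (Var q) (Box (Imp (Neg (Var q)) x))) (Imp (Neg (Var q)) (Box (Imp (Var q) x)))"

definition boxes_agree :: "nat \<Rightarrow> fm \<Rightarrow> fm" where
  "boxes_agree q x =
     And (Imp (Var q) (Iff (Box (Imp (Neg (Var q)) x)) (Box (Imp (Var q) x))))
         (Imp (Neg (Var q)) (Iff (Box (Imp (Var q) x)) (Box (Imp (Neg (Var q)) x))))"

primrec cross_tr :: "nat \<Rightarrow> fm \<Rightarrow> fm" where
  "cross_tr q (Var m) = Var m"
| "cross_tr q Bot = Bot"
| "cross_tr q (Imp a b) = Imp (cross_tr q a) (cross_tr q b)"
| "cross_tr q (Box a) = cross_box q (cross_tr q a)"

primrec cross_guard :: "nat \<Rightarrow> fm \<Rightarrow> fm" where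
  "cross_guard q (Var m) = Top"
| "cross_guard q Bot = Top"
| "cross_guard q (Imp a b) = And (cross_guard q a) (cross_guard q b)"
| "cross_guard q (Box a) = And (boxes_agree q (cross_tr q a)) (Box (cross_guard q a))"

lemma nml_boxdot_guard_imp_cross_tr_iff:
  "nml L \<Longrightarrow> Imp (boxdot (cross_guard q a)) (Iff (boxdot (cross_tr q a)) a) \<in> L"
proof (induction a)
  case (Imp a b)
  have "set [Imp (boxdot (cross_guard q a)) (Iff (boxdot (cross_tr q a)) a),
             Imp (boxdot (cross_guard q b)) (Iff (boxdot (cross_tr q b)) b)] \<subseteq> L"
    using Imp by simp
  then show ?case
    by (rule nml_tautological_consequence[OF Imp.prems]) (auto simp: tautology_def)
next
  case (Box a)
  note L = Box.prems
  define X where "X = boxdot (cross_tr q a)"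
  define G where "G = boxdot (cross_guard q a)"
  have IH: "Imp G (Iff X a) \<in> L"
    using Box.IH[OF L] unfolding X_def G_def .
  have "Imp (Box G) (Imp (Box X) (Box a)) \<in> L" "Imp (Box G) (Imp (Box a) (Box X)) \<in> L"
    by (rule nml_Box_regular[OF L], rule nml_tautological_consequence[OF L, of "[Imp G (Iff X a)]"],
        use IH in \<open>auto simp: tautology_def\<close>)+
  moreover have "Imp (Box X) (Box (Imp (Neg (Var q)) X)) \<in> L" "Imp (Box X) (Box (Imp (Var q) X)) \<in> L"
    by (rule nml_Box_mono[OF L], rule nml_tautology[OF L], auto simp: tautology_def)+
  moreover have "Imp (Box (Imp (Neg (Var q)) X)) (Imp (Box (Imp (Var q) X)) (Box X)) \<in> L"
    by (rule nml_Box_regular[OF L], rule nml_tautology[OF L]) (auto simp: tautology_def)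
  ultimately have "set [Imp (Box G) (Imp (Box X) (Box a)), Imp (Box G) (Imp (Box a) (Box X)),
      Imp (Box X) (Box (Imp (Neg (Var q)) X)), Imp (Box X) (Box (Imp (Var q) X)),
      Imp (Box (Imp (Neg (Var q)) X)) (Imp (Box (Imp (Var q) X)) (Box X))] \<subseteq> L"
    by simp
  then show ?case
    by (rule nml_tautological_consequence[OF L])
       (unfold tautology_def cross_guard.simps cross_tr.simps cross_box_def boxes_agree_def
          boxdot.simps boxdot_derived X_def[symmetric] G_def[symmetric],
        intro allI, simp only: foldr_Cons foldr_Nil comp_apply id_apply peval.simps peval_derived,
        argo)
qed (auto intro: nml_tautology simp: tautology_def)

lemma nml_boxdot_guard_imp_cross_tr:
  assumes L: "nml L" and "a \<in> L"
  shows "boxdot (Imp (cross_guard q a) (cross_tr q a)) \<in> L"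
proof (rule nml_tautological_consequence[OF L])
  show "set [a, Imp (boxdot (cross_guard q a)) (Iff (boxdot (cross_tr q a)) a)] \<subseteq> L"
    using assms nml_boxdot_guard_imp_cross_tr_iff[OF L] by simp
qed (auto simp: tautology_def)

definition doubled_val :: "'w gframe \<Rightarrow> nat \<Rightarrow> (nat \<Rightarrow> 'w set) \<Rightarrow> nat \<Rightarrow> ('w \<times> bool) set" where
  "doubled_val F q V = (\<lambda>m. if m = q then worlds F \<times> {True} else V m \<times> UNIV)"

lemma doubled_val_adm:
  assumes "gen_frame F" and "\<forall>m. V m \<in> adm F"
  shows "doubled_val F q V m \<in> adm (double F)"
proof (cases "m = q")
  case True
  have "worlds F \<in> adm F" "{} \<in> adm F"
    using assms(1) unfolding gen_frame_def by (metis Diff_empty)+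
  moreover have "doubled_val F q V m = {} \<times> {False} \<union> worlds F \<times> {True}"
    using True by (simp add: doubled_val_def)
  ultimately show ?thesis by (auto simp: double_def)
next
  case False
  then have "doubled_val F q V m = V m \<times> {False} \<union> V m \<times> {True}"
    by (auto simp: doubled_val_def)
  then show ?thesis using assms(2) by (auto simp: double_def)
qed

lemma mem_doubled_val_self [simp]: "w \<in> worlds F \<Longrightarrow> (w, i) \<in> doubled_val F q V q \<longleftrightarrow> i"
  by (simp add: doubled_val_def)

lemma rel_double [simp]: "((w, i), (v, j)) \<in> rel (double F) \<longleftrightarrow> (w, v) \<in> rel F"
  by (simp add: double_def)

lemma sat_double_cross_tr:
  assumes R: "rel F \<subseteq> worlds F \<times> worlds F" and "q \<notin> vars a" and "w \<in> worlds F"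
  shows "sat (double F) (doubled_val F q V) (w, i) (cross_tr q a) \<longleftrightarrow> sat F V w a"
  using assms(2,3)
proof (induction a arbitrary: w i)
  case (Box a)
  have "\<And>v. (w, v) \<in> rel F \<Longrightarrow> v \<in> worlds F" using R by blast
  with Box show ?case
    by (auto simp: cross_box_def doubled_val_def)
qed (auto simp: doubled_val_def)

lemma sat_double_cross_guard:
  assumes R: "rel F \<subseteq> worlds F \<times> worlds F" and "q \<notin> vars a" and "w \<in> worlds F"
  shows "sat (double F) (doubled_val F q V) (w, i) (cross_guard q a)"
  using assms(2,3)
proof (induction a arbitrary: w i)
  case (Box a)
  have "\<And>v. (w, v) \<in> rel F \<Longrightarrow> v \<in> worlds F" using R by blast
  with Box show ?case
    by (auto simp: boxes_agree_def sat_double_cross_tr[OF R])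
qed auto

lemma valid_in_of_valid_in_double_cross:
  fixes F :: "'w gframe"
  assumes "gen_frame F" and q: "q \<notin> vars a"
    and valid: "valid_in (double F) (Imp (cross_guard q a) (cross_tr q a))"
  shows "valid_in F a"
  unfolding valid_in_def
proof (intro allI impI ballI)
  fix V :: "nat \<Rightarrow> 'w set" and w assume V: "\<forall>n. V n \<in> adm F" and w: "w \<in> worlds F"
  have R: "rel F \<subseteq> worlds F \<times> worlds F" using assms(1) unfolding gen_frame_def by blast
  have "sat (double F) (doubled_val F q V) (w, True) (Imp (cross_guard q a) (cross_tr q a))"
    using valid doubled_val_adm[OF assms(1) V] w unfolding valid_in_def double_def by auto
  then show "sat F V w a"
    using sat_double_cross_tr[OF R q w] sat_double_cross_guard[OF R q w] by simp
qed

theorem mainTheorem1: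
  fixes L0 :: "fm set" and C :: "'w gframe set"
  assumes "nml L0"
    and "logicT \<subseteq> L0"
    and "\<forall>F\<in>C. gen_frame F"
    and "complete_wrt L0 C"
    and "\<forall>F\<in>C. L_frame L0 (double F)"
  shows "strong_boxdot_property L0"
  unfolding strong_boxdot_property_def
proof (intro allI impI subsetI)
  fix L a
  assume L: "nml L" and "BD L \<subseteq> L0" and "a \<in> L"
  obtain q where q: "q \<notin> vars a"
    using ex_new_if_finite[OF infinite_UNIV_nat finite_vars] by blast
  have "Imp (cross_guard q a) (cross_tr q a) \<in> L0"
    using nml_boxdot_guard_imp_cross_tr[OF L \<open>a \<in> L\<close>] \<open>BD L \<subseteq> L0\<close> unfolding BD_def by blast
  then have "valid_in F a" if "F \<in> C" for F
    using valid_in_of_valid_in_double_cross[OF _ q] that assms(3,5) unfolding L_frame_def by blast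
  then show "a \<in> L0"
    using assms(4) unfolding complete_wrt_def by blast
qed

end
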